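(* For $i\in[m]$ let $N_i=\begin{pmatrix}a_i&b_i\\ -\infty&d_i\end{pmatrix}$ with $a_i,b_i,d_i\in\mathbb{R}$. Then $N_i\otimes N_j=N_j\otimes N_i$ for all $i,j\in[m]$ if and only if one of the following holds: (i) $a_i\ge d_i$ for all $i\in[m]$, and there is $c\in\mathbb{R}$ with $c=b_k-a_k$ for every $k$ with $a_k>d_k$ and $c\ge b_k-a_k$ for every $k$ with $a_k=d_k$; or (ii) $a_i\le d_i$ for all $i\in[m]$, and there is $c\in\mathbb{R}$ with $c=d_k-b_k$ for every $k$ with $a_k<d_k$ and $c\le d_k-b_k$ for every $k$ with $a_k=d_k$.
   Context: The max-plus algebra is $\mathbb{R}_{\max}=\mathbb{R}\cup\{-\infty\}$ with $a\oplus b=\max\{a,b\}$ and $a\otimes b=a+b$ (additive identity $-\infty$, multiplicative identity $0$). Matrix products are defined as in linear algebra with these operations: $(A\otimes B)_{jk}=\max_l(A_{jl}+B_{lk})$. *)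

theory Defs
  imports "HOL-Library.Extended_Real"
begin

text \<open>Max-plus algebra: elements are extended reals (only finite values and -infinity
are used). Matrices of size n are functions nat => nat => ereal, entries with
indices below n are meaningful.\<close>

definition mp_mult :: "nat \<Rightarrow> (nat \<Rightarrow> nat \<Rightarrow> ereal) \<Rightarrow> (nat \<Rightarrow> nat \<Rightarrow> ereal) \<Rightarrow> (nat \<Rightarrow> nat \<Rightarrow> ereal)"
  where "mp_mult n A B = (\<lambda>j k. Max ((\<lambda>l. A j l + B l k) ` {..<n}))"

definition upper2 :: "real \<Rightarrow> real \<Rightarrow> real \<Rightarrow> (nat \<Rightarrow> nat \<Rightarrow> ereal)"
  where "upper2 a b d = (\<lambda>j k.
     if j = 0 \<and> k = 0 then ereal a
     else if j = 0 \<and> k = 1 then ereal b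
     else if j = 1 \<and> k = 1 then ereal d
     else -\<infinity>)"

definition mp_eq :: "nat \<Rightarrow> (nat \<Rightarrow> nat \<Rightarrow> ereal) \<Rightarrow> (nat \<Rightarrow> nat \<Rightarrow> ereal) \<Rightarrow> bool"
  where "mp_eq n A B \<longleftrightarrow> (\<forall>j<n. \<forall>k<n. A j k = B j k)"

end

theory Submission
  imports Defs
begin

text \<open>Commutation of two matrices of this shape amounts to the single scalar equation
  max(a1 + b2, b1 + d2) = max(a2 + b1, b2 + d1). This equation is invariant under exchanging
  the diagonal entries a and d, which turns condition (ii) into condition (i) with c replaced
  by -c, so it suffices to treat families with a_k \<ge> d_k throughout. Writing x_k = b_k - a_k
  and e_k = a_k - d_k \<ge> 0, the equation reads max(x2, x1 - e2) = max(x1, x2 - e1): it forces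
  x1 = x2 when both e's are positive, x2 \<le> x1 when only e1 is, and nothing otherwise.
  Mixed families (some a_k > d_k, some a_l < d_l) never commute.\<close>

lemma mp_mult_upper2:
  "mp_mult 2 (upper2 a1 b1 d1) (upper2 a2 b2 d2) 0 0 = ereal (a1 + a2)"
  "mp_mult 2 (upper2 a1 b1 d1) (upper2 a2 b2 d2) 0 1 = ereal (max (a1 + b2) (b1 + d2))"
  "mp_mult 2 (upper2 a1 b1 d1) (upper2 a2 b2 d2) 1 0 = -\<infinity>"
  "mp_mult 2 (upper2 a1 b1 d1) (upper2 a2 b2 d2) 1 1 = ereal (d1 + d2)"
  by (simp_all add: mp_mult_def upper2_def lessThan_Suc numeral_2_eq_2 max.commute)

lemma mp_upper2_commute_iff:
  "mp_eq 2 (mp_mult 2 (upper2 a1 b1 d1) (upper2 a2 b2 d2))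
           (mp_mult 2 (upper2 a2 b2 d2) (upper2 a1 b1 d1))
   \<longleftrightarrow> max (a1 + b2) (b1 + d2) = max (a2 + b1) (b2 + d1)"
proof -
  have below_2: "(\<forall>j<(2::nat). P j) \<longleftrightarrow> P 0 \<and> P 1" for P
    by (auto simp: less_2_cases_iff)
  show ?thesis
    unfolding mp_eq_def below_2 mp_mult_upper2 ereal.inject by (simp add: add.commute)
qed

lemma upper2_commute_diag_sign:
  fixes a1 b1 d1 a2 b2 d2 :: real
  assumes "max (a1 + b2) (b1 + d2) = max (a2 + b1) (b2 + d1)" and "d1 < a1"
  shows "d2 \<le> a2"
  using assms by (auto simp: max_def split: if_splits)

lemma upper2_commute_iff_dominant:
  fixes a1 b1 d1 a2 b2 d2 :: real
  assumes "d1 \<le> a1" and "d2 \<le> a2"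
  shows "max (a1 + b2) (b1 + d2) = max (a2 + b1) (b2 + d1) \<longleftrightarrow>
           (d1 < a1 \<and> d2 < a2 \<longrightarrow> b1 - a1 = b2 - a2) \<and>
           (d1 < a1 \<and> a2 = d2 \<longrightarrow> b2 - a2 \<le> b1 - a1) \<and>
           (a1 = d1 \<and> d2 < a2 \<longrightarrow> b1 - a1 \<le> b2 - a2)"
  using assms by (auto simp: max_def)

definition dominant_commuting :: "'i set \<Rightarrow> ('i \<Rightarrow> real) \<Rightarrow> ('i \<Rightarrow> real) \<Rightarrow> ('i \<Rightarrow> real) \<Rightarrow> bool"
  where "dominant_commuting I a b d \<longleftrightarrow> (\<forall>i\<in>I. d i \<le> a i) \<and>
     (\<exists>c. (\<forall>k\<in>I. d k < a k \<longrightarrow> c = b k - a k) \<and> (\<forall>k\<in>I. a k = d k \<longrightarrow> b k - a k \<le> c))"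

lemma pairwise_commute_iff_dominant_commuting:
  fixes a b d :: "'i \<Rightarrow> real"
  assumes "finite I" and dominant: "\<forall>i\<in>I. d i \<le> a i"
  shows "(\<forall>i\<in>I. \<forall>j\<in>I. max (a i + b j) (b i + d j) = max (a j + b i) (b j + d i))
         \<longleftrightarrow> dominant_commuting I a b d"
proof
  assume comm: "\<forall>i\<in>I. \<forall>j\<in>I. max (a i + b j) (b i + d j) = max (a j + b i) (b j + d i)"
  have pair: "(d j < a j \<longrightarrow> b i - a i = b j - a j) \<and> (a j = d j \<longrightarrow> b j - a j \<le> b i - a i)"
    if "i \<in> I" "j \<in> I" "d i < a i" for i j
  proof -
    have "d i \<le> a i" "d j \<le> a j" using dominant that by auto
    moreover have "max (a i + b j) (b i + d j) = max (a j + b i) (b j + d i)"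
      using comm that by blast
    ultimately show ?thesis
      using \<open>d i < a i\<close> by (auto simp: upper2_commute_iff_dominant)
  qed
  show "dominant_commuting I a b d"
  proof (cases "\<exists>k0\<in>I. d k0 < a k0")
    case True
    then obtain k0 where k0: "k0 \<in> I" "d k0 < a k0" by blast
    have "\<forall>k\<in>I. d k < a k \<longrightarrow> b k0 - a k0 = b k - a k"
      and "\<forall>k\<in>I. a k = d k \<longrightarrow> b k - a k \<le> b k0 - a k0"
      using pair[OF k0(1) _ k0(2)] by blast+
    with dominant show ?thesis
      unfolding dominant_commuting_def by (intro conjI exI[of _ "b k0 - a k0"]) simp_all
  next
    case False
    let ?c = "Max ((\<lambda>k. b k - a k) ` I)"
    have "\<forall>k\<in>I. b k - a k \<le> ?c"
      using \<open>finite I\<close> by simp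
    with False dominant show ?thesis
      unfolding dominant_commuting_def by (intro conjI exI[of _ ?c]) auto
  qed
next
  assume "dominant_commuting I a b d"
  then obtain c where eq: "\<forall>k\<in>I. d k < a k \<longrightarrow> c = b k - a k"
    and le: "\<forall>k\<in>I. a k = d k \<longrightarrow> b k - a k \<le> c"
    unfolding dominant_commuting_def by blast
  show "\<forall>i\<in>I. \<forall>j\<in>I. max (a i + b j) (b i + d j) = max (a j + b i) (b j + d i)"
  proof (intro ballI)
    fix i j assume "i \<in> I" "j \<in> I"
    then have "d i \<le> a i" "d j \<le> a j"
      "d i < a i \<longrightarrow> c = b i - a i" "a i = d i \<longrightarrow> b i - a i \<le> c"
      "d j < a j \<longrightarrow> c = b j - a j" "a j = d j \<longrightarrow> b j - a j \<le> c"
      using dominant eq le by auto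
    then show "max (a i + b j) (b i + d j) = max (a j + b i) (b j + d i)"
      by (subst upper2_commute_iff_dominant) auto
  qed
qed

lemma pairwise_commute_iff:
  fixes a b d :: "'i \<Rightarrow> real"
  assumes "finite I"
  shows "(\<forall>i\<in>I. \<forall>j\<in>I. max (a i + b j) (b i + d j) = max (a j + b i) (b j + d i))
         \<longleftrightarrow> dominant_commuting I a b d \<or> dominant_commuting I d b a"
    (is "?comm \<longleftrightarrow> _")
proof -
  have swap: "max (a i + b j) (b i + d j) = max (a j + b i) (b j + d i) \<longleftrightarrow>
              max (d i + b j) (b i + a j) = max (d j + b i) (b j + a i)" for i j
    by (auto simp: max_def)
  have swapped: "?comm \<longleftrightarrow>
      (\<forall>i\<in>I. \<forall>j\<in>I. max (d i + b j) (b i + a j) = max (d j + b i) (b j + a i))"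
    by (simp only: swap)
  note dominant = pairwise_commute_iff_dominant_commuting[OF assms, where a = a and d = d]
    and dominant_swapped = pairwise_commute_iff_dominant_commuting[OF assms, where a = d and d = a]
  show ?thesis
  proof
    assume comm: ?comm
    have "(\<forall>i\<in>I. d i \<le> a i) \<or> (\<forall>i\<in>I. a i \<le> d i)"
    proof (rule ccontr)
      assume "\<not> ?thesis"
      then obtain i j where "i \<in> I" "a i < d i" "j \<in> I" "d j < a j"
        by (meson not_le)
      moreover have "max (a j + b i) (b j + d i) = max (a i + b j) (b i + d j)"
        using comm \<open>i \<in> I\<close> \<open>j \<in> I\<close> by simp
      ultimately show False
        using upper2_commute_diag_sign[of "a j" "b i" "b j" "d i" "a i" "d j"] by linarith
    qed
    then show "dominant_commuting I a b d \<or> dominant_commuting I d b a"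
    proof
      assume "\<forall>i\<in>I. d i \<le> a i"
      with comm dominant show ?thesis by simp
    next
      assume "\<forall>i\<in>I. a i \<le> d i"
      with comm swapped dominant_swapped show ?thesis by simp
    qed
  next
    assume "dominant_commuting I a b d \<or> dominant_commuting I d b a"
    then show ?comm
    proof
      assume "dominant_commuting I a b d"
      moreover from this have "\<forall>i\<in>I. d i \<le> a i"
        unfolding dominant_commuting_def by simp
      ultimately show ?comm using dominant by simp
    next
      assume "dominant_commuting I d b a"
      moreover from this have "\<forall>i\<in>I. a i \<le> d i"
        unfolding dominant_commuting_def by simp
      ultimately show ?comm using swapped dominant_swapped by simp
    qed
  qed
qed

lemma dominant_commuting_swap_iff:
  "dominant_commuting I d b a \<longleftrightarrow> (\<forall>i\<in>I. a i \<le> d i) \<and>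
     (\<exists>c. (\<forall>k\<in>I. a k < d k \<longrightarrow> c = d k - b k) \<and> (\<forall>k\<in>I. a k = d k \<longrightarrow> c \<le> d k - b k))"
  (is "_ \<longleftrightarrow> _ \<and> (\<exists>c. ?P c)")
proof -
  let ?Q = "\<lambda>c. (\<forall>k\<in>I. a k < d k \<longrightarrow> c = b k - d k) \<and> (\<forall>k\<in>I. d k = a k \<longrightarrow> b k - d k \<le> c)"
  have negate: "?Q c \<longleftrightarrow> ?P (- c)" for c
    by auto
  have "(\<exists>c. ?Q c) \<longleftrightarrow> (\<exists>c. ?P c)"
  proof
    assume "\<exists>c. ?Q c"
    then obtain c where "?Q c" ..
    then have "?P (- c)" by (rule negate[THEN iffD1])
    then show "\<exists>c. ?P c" ..
  next
    assume "\<exists>c. ?P c"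
    then obtain c where "?P c" ..
    then have "?P (- (- c))" by (simp only: minus_minus)
    then have "?Q (- c)" by (rule negate[THEN iffD2])
    then show "\<exists>c. ?Q c" ..
  qed
  then show ?thesis
    unfolding dominant_commuting_def by (simp only:)
qed

theorem mainTheorem20:
  fixes m :: nat and a b d :: "nat \<Rightarrow> real"
  shows "(\<forall>i\<in>{1..m}. \<forall>j\<in>{1..m}.
            mp_eq 2 (mp_mult 2 (upper2 (a i) (b i) (d i)) (upper2 (a j) (b j) (d j)))
                    (mp_mult 2 (upper2 (a j) (b j) (d j)) (upper2 (a i) (b i) (d i))))
     \<longleftrightarrow>
     ((\<forall>i\<in>{1..m}. a i \<ge> d i) \<and>
        (\<exists>c::real. (\<forall>k\<in>{1..m}. a k > d k \<longrightarrow> c = b k - a k) \<and>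
                   (\<forall>k\<in>{1..m}. a k = d k \<longrightarrow> c \<ge> b k - a k)))
     \<or> ((\<forall>i\<in>{1..m}. a i \<le> d i) \<and>
        (\<exists>c::real. (\<forall>k\<in>{1..m}. a k < d k \<longrightarrow> c = d k - b k) \<and>
                   (\<forall>k\<in>{1..m}. a k = d k \<longrightarrow> c \<le> d k - b k)))"
  unfolding mp_upper2_commute_iff pairwise_commute_iff[OF finite_atLeastAtMost]
    dominant_commuting_swap_iff[of "{1..m}" d b a]
  by (simp only: dominant_commuting_def)

end
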